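(* For every $n\ge 2$, $f_{0,n}=(2n-4)!!$ and, for every $k=1,\dots,n-2$, $$f_{k,n}=\frac{(2n-k-5)!\,k}{(2n-2k-4)!!}\cdot{}_3F_2\!\left(\begin{array}{l}1,\ 2-n,\ k+2-n\\ \frac{k+5}{2}-n,\ \frac{k}{2}-n+3\end{array};1\right).$$
   Context: $\mathcal{T}_n$ is the set of fully resolved (binary) rooted trees with leaves bijectively labeled by $\{1,\dots,n\}$. For leaves $i\ne j$, $\varphi_T(i,j)$ is the depth (number of arcs from the root) of their lowest common ancestor. For $k\ge 0$, $f_{k,n}=|\{T\in\mathcal{T}_n:\varphi_T(1,2)=k\}|$. Double factorial: $(2m)!!=(2m)(2m-2)\cdots2$, $0!!=1$. The generalized hypergeometric function is ${}_pF_q\left(\begin{smallmatrix}a_1,\dots,a_p\\ b_1,\dots,b_q\end{smallmatrix};z\right)=\sum_{m\ge0}\frac{(a_1)_m\cdots(a_p)_m}{(b_1)_m\cdots(b_q)_m}\frac{z^m}{m!}$ with $(a)_0=1$, $(a)_m=a(a+1)\cdots(a+m-1)$; in the formula above the series terminates, being understood as the finite sum over $m=0,\dots,n-k-2$ (beyond which the factor $(k+2-n)_m$ vanishes; for these $m$ the denominators are nonzero). *)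

theory Defs
  imports Complex_Main
begin

text \<open>An unordered (fully resolved) tree is
  represented by its canonical ordered form: at every internal node the child containing
  the smallest leaf label is written on the left.\<close>

datatype ltree = Leaf nat | Node ltree ltree

fun leaves :: "ltree \<Rightarrow> nat list" where
  "leaves (Leaf a) = [a]"
| "leaves (Node l r) = leaves l @ leaves r"

fun canonical :: "ltree \<Rightarrow> bool" where
  "canonical (Leaf a) = True"
| "canonical (Node l r) =
     (canonical l \<and> canonical r \<and> Min (set (leaves l)) < Min (set (leaves r)))"

definition trees :: "nat \<Rightarrow> ltree set" where
  "trees n = {t. canonical t \<and> distinct (leaves t) \<and> set (leaves t) = {1..n}}"

text \<open>Depth (number of arcs from the root) of the lowest common ancestor of leaves i and j.\<close>
fun phi :: "ltree \<Rightarrow> nat \<Rightarrow> nat \<Rightarrow> nat" where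
  "phi (Leaf a) i j = 0"
| "phi (Node l r) i j =
     (if i \<in> set (leaves l) \<and> j \<in> set (leaves l) then Suc (phi l i j)
      else if i \<in> set (leaves r) \<and> j \<in> set (leaves r) then Suc (phi r i j)
      else 0)"

definition f :: "nat \<Rightarrow> nat \<Rightarrow> nat" where
  "f k n = card {t \<in> trees n. phi t 1 2 = k}"

fun dfact :: "nat \<Rightarrow> nat" where
  "dfact 0 = 1"
| "dfact (Suc 0) = 1"
| "dfact (Suc (Suc m)) = (m + 2) * dfact m"

definition hyp3F2 :: "real \<Rightarrow> real \<Rightarrow> real \<Rightarrow> real \<Rightarrow> real \<Rightarrow> real \<Rightarrow> nat \<Rightarrow> real" where
  "hyp3F2 a1 a2 a3 b1 b2 z N =
     (\<Sum>m\<le>N. pochhammer a1 m * pochhammer a2 m * pochhammer a3 m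
              / (pochhammer b1 m * pochhammer b2 m) * z ^ m / fact m)"

end

theory Submission
  imports Defs
begin

text \<open>Every tree on n + 1 leaves arises in exactly one way from a tree on n leaves by
  attaching the leaf n + 1 as a new sibling of one of its 2n - 1 nodes. The depth of the lowest
  common ancestor of the leaves 1 and 2 grows by one precisely when the chosen node is one of
  the k + 1 nodes on the path from the root to that ancestor, which yields the recurrence
  f(k, n+1) = (2n - 2 - k) f(k, n) + k f(k-1, n). Writing n = k + j + 2, the expression
  (k + j)! 2^j (b(k,0) + b(k,1)/4 + ... + b(k,j)/4^j) in the ballot numbers b(k, i) satisfies
  the same recurrence, by a telescoping identity for ballot numbers, and has the same initial
  values; summed in reverse order it is, term by term, the terminating 3F2 series.\<close>

section \<open>Growing a tree by one leaf\<close>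

fun num_nodes :: "ltree \<Rightarrow> nat" where
  "num_nodes (Leaf a) = 1"
| "num_nodes (Node l r) = Suc (num_nodes l + num_nodes r)"

text \<open>The nodes of a tree are numbered 0, 1, ... in preorder; insert_leaf x t p hangs
  the new leaf x as the right sibling of node p.\<close>

fun insert_leaf :: "nat \<Rightarrow> ltree \<Rightarrow> nat \<Rightarrow> ltree" where
  "insert_leaf x t 0 = Node t (Leaf x)"
| "insert_leaf x (Leaf a) (Suc p) = Node (Leaf a) (Leaf x)"
| "insert_leaf x (Node l r) (Suc p) =
     (if p < num_nodes l then Node (insert_leaf x l p) r
      else Node l (insert_leaf x r (p - num_nodes l)))"

fun remove_leaf :: "nat \<Rightarrow> ltree \<Rightarrow> ltree" where
  "remove_leaf x (Leaf a) = Leaf a"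
| "remove_leaf x (Node l r) =
     (if r = Leaf x then l else if l = Leaf x then r
      else if x \<in> set (leaves l) then Node (remove_leaf x l) r else Node l (remove_leaf x r))"

fun insert_pos :: "nat \<Rightarrow> ltree \<Rightarrow> nat" where
  "insert_pos x (Leaf a) = 0"
| "insert_pos x (Node l r) =
     (if r = Leaf x then 0
      else if x \<in> set (leaves l) then Suc (insert_pos x l)
      else Suc (num_nodes l + insert_pos x r))"

lemma leaves_not_Nil: "leaves t \<noteq> []"
  by (induction t) auto

lemma num_nodes_pos: "num_nodes t > 0"
  by (cases t) auto

lemma num_nodes_length_leaves: "num_nodes t + 1 = 2 * length (leaves t)"
  by (induction t) simp_all

lemma insert_leaf_not_Leaf: "insert_leaf x t p \<noteq> Leaf y"
  by (induction x t p rule: insert_leaf.induct) auto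

lemma set_leaves_insert_leaf: "set (leaves (insert_leaf x t p)) = insert x (set (leaves t))"
  by (induction x t p rule: insert_leaf.induct) auto

lemma distinct_leaves_insert_leaf:
  "distinct (leaves t) \<Longrightarrow> x \<notin> set (leaves t) \<Longrightarrow> distinct (leaves (insert_leaf x t p))"
  by (induction x t p rule: insert_leaf.induct) (auto simp: set_leaves_insert_leaf)

lemma Min_insert_greater:
  "finite A \<Longrightarrow> A \<noteq> {} \<Longrightarrow> \<forall>y\<in>A. y < x \<Longrightarrow> Min (insert x A) = Min (A :: 'a::linorder set)"
  by (simp add: min_def) (meson Min_in less_le_not_le)

lemma canonical_insert_leaf:
  "canonical t \<Longrightarrow> \<forall>y\<in>set (leaves t). y < x \<Longrightarrow> canonical (insert_leaf x t p)"
  by (induction x t p rule: insert_leaf.induct)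
    (use leaves_not_Nil in \<open>auto simp: Min_less_iff set_leaves_insert_leaf Min_insert_greater\<close>)

lemma remove_insert_leaf:
  assumes "x \<notin> set (leaves t)" "p < num_nodes t"
  shows "remove_leaf x (insert_leaf x t p) = t \<and> insert_pos x (insert_leaf x t p) = p"
  using assms
  by (induction x t p rule: insert_leaf.induct)
    (auto simp: set_leaves_insert_leaf insert_leaf_not_Leaf split: ltree.splits)

lemma set_leaves_remove_leaf_subset: "set (leaves (remove_leaf x t)) \<subseteq> set (leaves t)"
  by (induction t) auto

lemma distinct_leaves_remove_leaf: "distinct (leaves t) \<Longrightarrow> distinct (leaves (remove_leaf x t))"
  by (induction t) (use set_leaves_remove_leaf_subset in fastforce)+

lemma set_leaves_remove_leaf:
  "distinct (leaves t) \<Longrightarrow> x \<in> set (leaves t) \<Longrightarrow> t \<noteq> Leaf x \<Longrightarrow>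
   set (leaves (remove_leaf x t)) = set (leaves t) - {x}"
  by (induction t) auto

lemma Min_remove_max:
  assumes "finite A" "A - {x} \<noteq> {}" "\<forall>y\<in>A. y \<le> x"
  shows "Min (A - {x}) = Min (A :: 'a::linorder set)"
proof (cases "x \<in> A")
  case True
  then have "A = insert x (A - {x})" by auto
  moreover have "\<forall>y\<in>A - {x}. y < x"
    using assms(3) by auto
  ultimately show ?thesis
    using assms(1,2) Min_insert_greater[of "A - {x}" x] by simp
qed simp

lemma Min_leaves_remove_leaf:
  assumes "distinct (leaves t)" "x \<in> set (leaves t)" "t \<noteq> Leaf x" "\<forall>y\<in>set (leaves t). y \<le> x"
  shows "Min (set (leaves (remove_leaf x t))) = Min (set (leaves t))"
proof -
  have "set (leaves (remove_leaf x t)) = set (leaves t) - {x}"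
    using assms(1-3) by (rule set_leaves_remove_leaf)
  moreover have "set (leaves (remove_leaf x t)) \<noteq> {}"
    using leaves_not_Nil by simp
  ultimately show ?thesis
    using assms(4) Min_remove_max[of "set (leaves t)" x] by simp
qed

lemma canonical_remove_leaf:
  "canonical t \<Longrightarrow> distinct (leaves t) \<Longrightarrow> x \<in> set (leaves t) \<Longrightarrow> t \<noteq> Leaf x \<Longrightarrow>
   \<forall>y\<in>set (leaves t). y \<le> x \<Longrightarrow> canonical (remove_leaf x t)"
  by (induction t) (auto simp: Min_leaves_remove_leaf)

lemma canonical_left_child_not_max:
  assumes "canonical (Node l r)" "\<forall>y\<in>set (leaves (Node l r)). y \<le> x"
  shows "l \<noteq> Leaf x"
proof
  assume "l = Leaf x"
  moreover obtain y where "y \<in> set (leaves r)"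
    using leaves_not_Nil by (metis list.set_intros(1) neq_Nil_conv)
  ultimately show False
    using assms by (fastforce dest: Min_le[of "set (leaves r)", rotated])
qed

lemma insert_remove_leaf:
  "canonical t \<Longrightarrow> distinct (leaves t) \<Longrightarrow> x \<in> set (leaves t) \<Longrightarrow> t \<noteq> Leaf x \<Longrightarrow>
   \<forall>y\<in>set (leaves t). y \<le> x \<Longrightarrow>
   insert_pos x t < num_nodes (remove_leaf x t) \<and> insert_leaf x (remove_leaf x t) (insert_pos x t) = t"
proof (induction t)
  case (Node l r)
  then have "l \<noteq> Leaf x"
    using canonical_left_child_not_max by blast
  with Node show ?case
    using num_nodes_pos[of l] by auto
qed simp

lemma bij_betw_insert_leaf_trees:
  assumes "n \<ge> 1"
  shows "bij_betw (\<lambda>(t, p). insert_leaf (Suc n) t p)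
           (SIGMA t:trees n. {..<num_nodes t}) (trees (Suc n))"
proof (rule bij_betw_byWitness[where f' = "\<lambda>t. (remove_leaf (Suc n) t, insert_pos (Suc n) t)"])
  let ?ins = "\<lambda>(t, p). insert_leaf (Suc n) t p"
  let ?rem = "\<lambda>t. (remove_leaf (Suc n) t, insert_pos (Suc n) t)"
  let ?S = "SIGMA t:trees n. {..<num_nodes t}"
  have not_Leaf: "t \<noteq> Leaf (Suc n)" if "t \<in> trees (Suc n)" for t
  proof -
    have "1 \<in> set (leaves t)"
      using that by (simp add: trees_def)
    with assms show ?thesis
      by auto
  qed
  show "\<forall>a\<in>?S. ?rem (?ins a) = a"
    by (auto simp: trees_def remove_insert_leaf)
  show "\<forall>t\<in>trees (Suc n). ?ins (?rem t) = t"
    using not_Leaf by (auto simp: trees_def insert_remove_leaf)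
  show "?ins ` ?S \<subseteq> trees (Suc n)"
    by (auto simp: trees_def set_leaves_insert_leaf
        intro!: canonical_insert_leaf distinct_leaves_insert_leaf)
  show "?rem ` trees (Suc n) \<subseteq> ?S"
    using not_Leaf by (auto simp: trees_def insert_remove_leaf set_leaves_remove_leaf
        intro!: canonical_remove_leaf distinct_leaves_remove_leaf)
qed

lemma length_leaves_trees: "t \<in> trees n \<Longrightarrow> length (leaves t) = n"
  by (auto simp: trees_def dest: distinct_card)

lemma trees_1: "trees 1 = {Leaf 1}"
proof -
  have "t = Leaf 1" if "t \<in> trees 1" for t
  proof (cases t)
    case (Node l r)
    then have "num_nodes t > 1"
      using num_nodes_pos[of l] by simp
    with num_nodes_length_leaves[of t] length_leaves_trees[OF that] show ?thesis
      by simp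
  qed (use that in \<open>auto simp: trees_def\<close>)
  then show ?thesis
    by (auto simp: trees_def)
qed

lemma finite_trees: "finite (trees n)"
proof (induction n)
  case 0
  show ?case
    using leaves_not_Nil by (simp add: trees_def)
next
  case (Suc n)
  show ?case
  proof (cases "n = 0")
    case False
    have "finite (SIGMA t:trees n. {..<num_nodes t})"
      using Suc.IH by blast
    then show ?thesis
      using bij_betw_finite[OF bij_betw_insert_leaf_trees[of n]] False by simp
  qed (use trees_1 in simp)
qed

lemma card_trees_Suc:
  assumes "n \<ge> 1"
  shows "card {t \<in> trees (Suc n). P t} =
    (\<Sum>t\<in>trees n. card {p. p < num_nodes t \<and> P (insert_leaf (Suc n) t p)})"
proof -
  let ?g = "\<lambda>(t, p). insert_leaf (Suc n) t p"
  let ?S = "SIGMA t:trees n. {p. p < num_nodes t \<and> P (insert_leaf (Suc n) t p)}"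
  have bij: "bij_betw ?g (SIGMA t:trees n. {..<num_nodes t}) (trees (Suc n))"
    using assms by (rule bij_betw_insert_leaf_trees)
  have "trees (Suc n) = ?g ` (SIGMA t:trees n. {..<num_nodes t})"
    using bij by (simp add: bij_betw_def)
  then have "?g ` ?S = {t \<in> trees (Suc n). P t}"
    by auto
  then have "bij_betw ?g ?S {t \<in> trees (Suc n). P t}"
    by (intro bij_betw_subset[OF bij]) auto
  then have "card {t \<in> trees (Suc n). P t} = card ?S"
    by (simp add: bij_betw_same_card)
  also have "\<dots> = (\<Sum>t\<in>trees n. card {p. p < num_nodes t \<and> P (insert_leaf (Suc n) t p)})"
    by (rule card_SigmaI) (simp_all add: finite_trees)
  finally show ?thesis .
qed

section \<open>Depth of the lowest common ancestor\<close>

text \<open>The preorder positions of the nodes on the path from the root to the lowest common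
  ancestor of the leaves i and j.\<close>

fun lca_path :: "ltree \<Rightarrow> nat \<Rightarrow> nat \<Rightarrow> nat set" where
  "lca_path (Leaf a) i j = {0}"
| "lca_path (Node l r) i j = insert 0
     (if i \<in> set (leaves l) \<and> j \<in> set (leaves l) then Suc ` lca_path l i j
      else if i \<in> set (leaves r) \<and> j \<in> set (leaves r)
      then (\<lambda>p. Suc (num_nodes l + p)) ` lca_path r i j
      else {})"

lemma lca_path_subset: "lca_path t i j \<subseteq> {..<num_nodes t}"
  by (induction t) auto

lemma finite_lca_path: "finite (lca_path t i j)"
  by (rule finite_subset[OF lca_path_subset]) simp

lemma zero_mem_lca_path: "0 \<in> lca_path t i j"
  by (cases t) auto

lemma card_lca_path: "card (lca_path t i j) = Suc (phi t i j)"
  by (induction t) (auto simp: finite_lca_path card_image inj_on_def card_insert_if)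

lemma phi_insert_leaf:
  "i \<in> set (leaves t) \<Longrightarrow> j \<in> set (leaves t) \<Longrightarrow> x \<notin> set (leaves t) \<Longrightarrow> p < num_nodes t \<Longrightarrow>
   phi (insert_leaf x t p) i j = phi t i j + (if p \<in> lca_path t i j then 1 else 0)"
proof (induction x t p rule: insert_leaf.induct)
  case (1 x t)
  then show ?case
    by (simp add: zero_mem_lca_path)
next
  case (2 x a p)
  then show ?case
    by simp
next
  case (3 x l r p)
  show ?case
  proof (cases "p < num_nodes l")
    case True
    with 3 show ?thesis
      by (auto simp: set_leaves_insert_leaf)
  next
    case False
    then have "Suc p \<in> (\<lambda>q. Suc (num_nodes l + q)) ` lca_path r i j \<longleftrightarrow>
        p - num_nodes l \<in> lca_path r i j"
      by force
    with 3 False lca_path_subset[of l i j] show ?thesis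
      by (auto simp: set_leaves_insert_leaf)
  qed
qed

lemma card_phi_insert_leaf:
  assumes "i \<in> set (leaves t)" "j \<in> set (leaves t)" "x \<notin> set (leaves t)"
  shows "card {p. p < num_nodes t \<and> phi (insert_leaf x t p) i j = k} =
    (if phi t i j = k then num_nodes t - Suc k else 0) + (if Suc (phi t i j) = k then k else 0)"
proof -
  have "{p. p < num_nodes t \<and> phi (insert_leaf x t p) i j = k} =
      (if phi t i j = k then {..<num_nodes t} - lca_path t i j
       else if Suc (phi t i j) = k then lca_path t i j else {})"
    using phi_insert_leaf[OF assms] lca_path_subset[of t i j] by (auto split: if_split_asm)
  then show ?thesis
    using card_lca_path[of t i j] lca_path_subset[of t i j]
    by (simp add: card_Diff_subset finite_lca_path)
qed

lemma f_Suc: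
  assumes "n \<ge> 2"
  shows "f k (Suc n) = (2 * n - 2 - k) * f k n + k * f (k - 1) n"
proof -
  have "f k (Suc n)
      = (\<Sum>t\<in>trees n. card {p. p < num_nodes t \<and> phi (insert_leaf (Suc n) t p) 1 2 = k})"
    unfolding f_def using assms by (simp add: card_trees_Suc)
  also have "\<dots> = (\<Sum>t\<in>trees n. (if phi t 1 2 = k then 2 * n - 2 - k else 0) +
                                  (if Suc (phi t 1 2) = k then k else 0))"
  proof (rule sum.cong[OF refl])
    fix t
    assume t: "t \<in> trees n"
    then have "num_nodes t = 2 * n - 1"
      using num_nodes_length_leaves[of t] length_leaves_trees[OF t] by simp
    moreover have "1 \<in> set (leaves t)" "2 \<in> set (leaves t)" "Suc n \<notin> set (leaves t)"
      using t assms by (auto simp: trees_def)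
    ultimately show "card {p. p < num_nodes t \<and> phi (insert_leaf (Suc n) t p) 1 2 = k} =
        (if phi t 1 2 = k then 2 * n - 2 - k else 0) + (if Suc (phi t 1 2) = k then k else 0)"
      using card_phi_insert_leaf[of 1 t 2 "Suc n" k] by simp
  qed
  also have "\<dots> = (2 * n - 2 - k) * f k n + k * card {t \<in> trees n. Suc (phi t 1 2) = k}"
    by (simp add: sum.distrib sum.inter_filter[symmetric] finite_trees f_def)
  also have "k * card {t \<in> trees n. Suc (phi t 1 2) = k} = k * f (k - 1) n"
    unfolding f_def by (cases k) auto
  finally show ?thesis .
qed

lemma trees_2: "trees 2 = {Node (Leaf 1) (Leaf 2)}"
proof -
  have "trees (Suc 1) = (\<lambda>(t, p). insert_leaf (Suc 1) t p) ` (SIGMA t:trees 1. {..<num_nodes t})"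
    using bij_betw_insert_leaf_trees[of 1] by (simp add: bij_betw_def)
  also have "\<dots> = {Node (Leaf 1) (Leaf 2)}"
    unfolding trees_1 by (auto simp: numeral_2_eq_2 intro!: image_eqI[where x = "(Leaf 1, 0)"])
  finally show ?thesis
    by (simp add: numeral_2_eq_2)
qed

lemma f_2: "f k 2 = (if k = 0 then 1 else 0)"
proof -
  have "{t \<in> trees 2. phi t 1 2 = k} = (if k = 0 then {Node (Leaf 1) (Leaf 2)} else {})"
    by (auto simp: trees_2)
  then show ?thesis
    by (simp add: f_def)
qed

section \<open>Ballot numbers and the closed form\<close>

text \<open>The ballot numbers k/(k+2i) * (k+2i choose i), with the Kronecker delta as their value
  at k = 0, where the factorial form would involve fact (-1).\<close>

definition ballot :: "nat \<Rightarrow> nat \<Rightarrow> real" where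
  "ballot k i = (if k = 0 then (if i = 0 then 1 else 0)
                 else real k * fact (k + 2 * i - 1) / (fact (k + i) * fact i))"

definition ballot_sum :: "nat \<Rightarrow> nat \<Rightarrow> real" where
  "ballot_sum k j = (\<Sum>i\<le>j. ballot k i / 4 ^ i)"

lemma ballot_0_right [simp]: "ballot k 0 = 1"
  by (simp add: ballot_def fact_reduce)

lemma ballot_sum_0_right [simp]: "ballot_sum k 0 = 1"
  by (simp add: ballot_sum_def)

lemma ballot_sum_0_left [simp]: "ballot_sum 0 j = 1"
  by (simp add: ballot_sum_def ballot_def sum.atMost_shift)

lemma ballot_sum_Suc: "ballot_sum k (Suc j) = ballot_sum k j + ballot k (Suc j) / 4 ^ Suc j"
  by (simp add: ballot_sum_def)

lemma ballot_Suc_right: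
  assumes "k \<ge> 1"
  shows "ballot k (Suc m) = (real k + 2 * real m) * (real k + 2 * real m + 1) * ballot k m
                            / ((real k + real m + 1) * (real m + 1))"
proof -
  have "(fact (k + 2 * Suc m - 1) :: real)
      = (real k + 2 * real m + 1) * ((real k + 2 * real m) * fact (k + 2 * m - 1))"
    using assms fact_reduce[of "k + 2 * m", where 'a = real] by (simp add: algebra_simps)
  moreover have "(fact (k + Suc m) :: real) = (real k + real m + 1) * fact (k + m)"
    by (simp add: algebra_simps)
  ultimately show ?thesis
    using assms by (simp add: ballot_def) (simp add: ac_simps)
qed

lemma ballot_pred_Suc_right:
  assumes "k \<ge> 1"
  shows "ballot (k - 1) (Suc m) = (real k - 1) * (real k + 2 * real m) * ballot k m / (real k * (real m + 1))"
proof (cases "k = 1")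
  case False
  have "(fact (k - 1 + 2 * Suc m - 1) :: real) = (real k + 2 * real m) * fact (k + 2 * m - 1)"
    using assms fact_reduce[of "k + 2 * m", where 'a = real] by (simp add: algebra_simps)
  moreover have "k - 1 + Suc m = k + m"
    using assms by simp
  ultimately show ?thesis
    using assms False by (simp add: ballot_def of_nat_diff)
qed (simp add: ballot_def)

lemma ballot_step:
  assumes "k \<ge> 1"
  shows "2 * real k * ballot (k - 1) (Suc m)
       = 2 * (real k + real m + 1) * ballot k (Suc m) - 4 * (real k + 2 * real m) * ballot k m"
proof -
  define X where "X = ballot k m"
  have m: "real m + 1 > 0" and km: "real k + real m + 1 \<noteq> 0"
    by simp_all
  have "2 * real k * ballot (k - 1) (Suc m) = 2 * (real k - 1) * (real k + 2 * real m) / (real m + 1) * X"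
    unfolding ballot_pred_Suc_right[OF assms] X_def using assms by simp
  also have "\<dots> = 2 * (real k + 2 * real m) * (real k + 2 * real m + 1) / (real m + 1) * X
                    - 4 * (real k + 2 * real m) * X"
    using m by (simp add: field_simps)
  also have "2 * (real k + 2 * real m) * (real k + 2 * real m + 1) / (real m + 1) * X
           = 2 * (real k + real m + 1) * ballot k (Suc m)"
  proof -
    have cancel: "2 * a * (Y / (a * b)) = 2 * Y / b" if "a \<noteq> 0" for a b Y :: real
      using that by simp
    show ?thesis
      unfolding ballot_Suc_right[OF assms] cancel[OF km] X_def by simp
  qed
  finally show ?thesis
    unfolding X_def .
qed

lemma ballot_sum_telescope:
  assumes "k \<ge> 1"
  shows "2 * real k * ballot_sum (k - 1) m
       = real k * ballot_sum k m + (real k + 2 * real m) * ballot k m / 4 ^ m"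
proof (induction m)
  case (Suc m)
  have "2 * real k * ballot_sum (k - 1) (Suc m)
      = real k * ballot_sum k m + (real k + 2 * real m) * ballot k m / 4 ^ m
        + 2 * real k * ballot (k - 1) (Suc m) / 4 ^ Suc m"
    using Suc by (simp add: ballot_sum_Suc algebra_simps)
  also have "\<dots> = real k * ballot_sum k (Suc m)
                    + (real k + 2 * real (Suc m)) * ballot k (Suc m) / 4 ^ Suc m"
    unfolding ballot_step[OF assms] ballot_sum_Suc by (simp add: field_simps)
  finally show ?case .
qed simp

text \<open>The value of f k n at n = k + j + 2.\<close>

definition f_closed :: "nat \<Rightarrow> nat \<Rightarrow> real" where
  "f_closed k j = fact (k + j) * 2 ^ j * ballot_sum k j"

lemma f_closed_0_right [simp]: "f_closed k 0 = fact k"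
  by (simp add: f_closed_def)

lemma f_closed_0_left: "f_closed 0 j = fact j * 2 ^ j"
  by (simp add: f_closed_def)

lemma f_closed_Suc:
  "f_closed k (Suc j) = (real k + 2 * real j + 2) * f_closed k j + real k * f_closed (k - 1) (Suc j)"
proof (cases "k = 0")
  case True
  then show ?thesis
    by (simp add: f_closed_0_left algebra_simps)
next
  case False
  define T where "T = ballot k (Suc j) / 4 ^ Suc j"
  have k: "k - 1 + Suc j = k + j"
    using False by simp
  have tel: "2 * real k * ballot_sum (k - 1) (Suc j)
             = real k * ballot_sum k (Suc j) + (real k + 2 * real j + 2) * T"
    using ballot_sum_telescope[of k "Suc j"] False by (simp add: T_def)
  have "(real k + 2 * real j + 2) * f_closed k j + real k * f_closed (k - 1) (Suc j)
      = fact (k + j) * 2 ^ j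
        * ((real k + 2 * real j + 2) * ballot_sum k j + 2 * real k * ballot_sum (k - 1) (Suc j))"
    unfolding f_closed_def k by (simp add: algebra_simps)
  also have "\<dots> = fact (k + j) * 2 ^ j
                    * ((real k + 2 * real j + 2) * (ballot_sum k j + T) + real k * ballot_sum k (Suc j))"
    unfolding tel by (simp add: algebra_simps)
  also have "\<dots> = fact (k + j) * 2 ^ j * (2 * (real k + real j + 1)) * ballot_sum k (Suc j)"
    unfolding ballot_sum_Suc T_def[symmetric] by (simp add: algebra_simps)
  also have "\<dots> = f_closed k (Suc j)"
    by (simp add: f_closed_def algebra_simps)
  finally show ?thesis ..
qed

section \<open>The hypergeometric form\<close>

lemma dfact_even: "dfact (2 * j) = 2 ^ j * fact j"
  by (induction j) (simp_all add: algebra_simps)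

lemma pochhammer_minus_of_nat:
  assumes "m \<le> N"
  shows "pochhammer (- of_nat N :: 'a::field_char_0) m = (-1) ^ m * fact N / fact (N - m)"
  using assms
proof (induction m)
  case (Suc m)
  have "(fact (N - m) :: 'a) = of_nat (N - m) * fact (N - Suc m)"
    using Suc.prems by (simp add: fact_reduce Suc_diff_Suc)
  with Suc show ?case
    by (simp add: pochhammer_Suc of_nat_diff field_simps)
qed simp

lemma pochhammer_half_pair:
  "pochhammer (z / 2) m * pochhammer (z / 2 + 1 / 2) m = pochhammer (z :: 'a::field_char_0) (2 * m) / 4 ^ m"
  using pochhammer_double[of "z / 2" m] by (simp add: power_mult)

lemma hyp3F2_ballot_term:
  assumes "k \<ge> 1" "m \<le> j"
  shows "pochhammer 1 m * pochhammer (- real (k + j)) m * pochhammer (- real j) m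
         / (pochhammer (- real (k + 2 * j - 1) / 2) m * pochhammer (- real (k + 2 * j - 1) / 2 + 1 / 2) m)
         * 1 ^ m / fact m
       = fact (k + j) * fact j * fact (k + 2 * j - 1 - 2 * m) * 4 ^ m
         / (fact (k + j - m) * fact (j - m) * fact (k + 2 * j - 1))"
proof -
  have double: "pochhammer (- real (k + 2 * j - 1)) (2 * m)
                = fact (k + 2 * j - 1) / fact (k + 2 * j - 1 - 2 * m)"
    using assms pochhammer_minus_of_nat[of "2 * m" "k + 2 * j - 1", where 'a = real]
    by (simp add: power_mult)
  have single: "pochhammer (- real (k + j)) m = (-1) ^ m * fact (k + j) / fact (k + j - m)"
    "pochhammer (- real j) m = (-1) ^ m * fact j / fact (j - m)"
    using assms by (simp_all only: pochhammer_minus_of_nat of_nat_fact)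
  have "(-1::real) ^ m * (-1) ^ m = 1"
    by (simp add: power_mult_distrib[symmetric])
  then show ?thesis
    unfolding pochhammer_half_pair double single pochhammer_fact[symmetric] by (simp add: field_simps)
qed

lemma hyp3F2_eq_f_closed:
  assumes "k \<ge> 1"
  shows "fact (k + 2 * j - 1) * real k / real (dfact (2 * j))
         * hyp3F2 1 (- real (k + j)) (- real j)
             (- real (k + 2 * j - 1) / 2) (- real (k + 2 * j - 1) / 2 + 1 / 2) 1 j
       = f_closed k j" (is "?c * ?F = _")
proof -
  define h where "h m = fact (k + j) * fact j * fact (k + 2 * j - 1 - 2 * m) * 4 ^ m
                        / (fact (k + j - m) * fact (j - m) * fact (k + 2 * j - 1) :: real)" for m
  have "?F = (\<Sum>m\<le>j. h m)"
    unfolding hyp3F2_def h_def by (intro sum.cong refl hyp3F2_ballot_term[OF assms]) simp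
  also have "\<dots> = (\<Sum>i\<le>j. h (j - i))"
    using sum.atLeastAtMost_rev[of h 0 j] by (simp add: atLeast0AtMost)
  finally have hyp: "?F = (\<Sum>i\<le>j. h (j - i))" .
  have summand: "?c * h (j - i) = fact (k + j) * 2 ^ j * (ballot k i / 4 ^ i)" if "i \<le> j" for i
  proof -
    have shift: "k + j - (j - i) = k + i" "j - (j - i) = i"
      "k + 2 * j - 1 - 2 * (j - i) = k + 2 * i - 1"
      using that assms by auto
    have "(4::real) ^ (j - i) * 4 ^ i = 4 ^ j"
      using that by (simp flip: power_add)
    moreover have "(4::real) ^ j = 2 ^ j * 2 ^ j"
      unfolding power_mult_distrib[symmetric] by simp
    ultimately have pow: "(4::real) ^ (j - i) = 2 ^ j * 2 ^ j / 4 ^ i"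
      by (simp add: field_simps)
    show ?thesis
      unfolding h_def shift pow dfact_even using assms by (simp add: ballot_def field_simps)
  qed
  show ?thesis
    unfolding hyp sum_distrib_left f_closed_def ballot_sum_def using summand by simp
qed

lemma f_eq_f_closed:
  "n \<ge> 2 \<Longrightarrow> real (f k n) = (if k + 2 \<le> n then f_closed k (n - k - 2) else 0)"
proof (induction n arbitrary: k rule: dec_induct)
  case base
  then show ?case
    by (simp add: f_2)
next
  case (step n)
  have rec: "real (f k (Suc n)) = real (2 * n - 2 - k) * real (f k n) + real k * real (f (k - 1) n)"
    using f_Suc[OF step.hyps(1)] by simp
  consider (inner) "k + 2 \<le> n" | (edge) "Suc n = k + 2" | (outer) "Suc n < k + 2"
    by linarith
  then show ?case
  proof cases
    case inner
    define j where "j = n - k - 2"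
    with inner have n: "n = k + j + 2"
      by simp
    have coeff: "real (2 * n - 2 - k) = real k + 2 * real j + 2"
      using n by simp
    have fk: "real (f k n) = f_closed k j"
      using step.IH[of k] n by simp
    have fk1: "real k * real (f (k - 1) n) = real k * f_closed (k - 1) (Suc j)"
      using step.IH[of "k - 1"] n by (cases k) simp_all
    have "real (f k (Suc n)) = (real k + 2 * real j + 2) * f_closed k j + real k * f_closed (k - 1) (Suc j)"
      unfolding rec coeff fk fk1 ..
    also have "\<dots> = f_closed k (Suc j)"
      by (rule f_closed_Suc[symmetric])
    finally show ?thesis
      using n by simp
  next
    case edge
    then have "k \<ge> 1" "real k * fact (k - 1) = (fact k :: real)"
      using step.hyps(1) by (simp_all add: fact_reduce)
    then show ?thesis
      using edge rec step.IH[of k] step.IH[of "k - 1"] by simp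
  next
    case outer
    moreover have "\<not> k - 1 + 2 \<le> n"
      using outer step.hyps(1) by arith
    ultimately show ?thesis
      using rec step.IH[of k] step.IH[of "k - 1"] by simp
  qed
qed

lemma f_0_eq_dfact:
  assumes "n \<ge> 2"
  shows "f 0 n = dfact (2 * n - 4)"
proof -
  have "real (f 0 n) = fact (n - 2) * 2 ^ (n - 2)"
    using f_eq_f_closed[OF assms, of 0] assms by (simp add: f_closed_0_left)
  also have "\<dots> = real (dfact (2 * n - 4))"
    using dfact_even[of "n - 2"] by (simp add: right_diff_distrib')
  finally show ?thesis
    by (simp only: of_nat_eq_iff)
qed

lemma f_eq_hyp3F2:
  assumes "1 \<le> k" "k + 2 \<le> n"
  shows "real (f k n) = real (fact (2 * n - k - 5)) * real k / real (dfact (2 * n - 2 * k - 4))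
           * hyp3F2 1 (2 - real n) (real k + 2 - real n)
                    ((real k + 5) / 2 - real n) (real k / 2 - real n + 3) 1 (n - k - 2)"
proof -
  define j where "j = n - k - 2"
  have n: "n = k + j + 2"
    using assms unfolding j_def by arith
  have args: "2 - real n = - real (k + j)" "real k + 2 - real n = - real j"
    "(real k + 5) / 2 - real n = - real (k + 2 * j - 1) / 2"
    "real k / 2 - real n + 3 = - real (k + 2 * j - 1) / 2 + 1 / 2"
    "2 * n - k - 5 = k + 2 * j - 1" "2 * n - 2 * k - 4 = 2 * j"
    using assms(1) unfolding n by (simp_all add: of_nat_diff field_simps)
  have "real (f k n) = f_closed k j"
    using f_eq_f_closed[of n k] n unfolding j_def by simp
  also have "\<dots> = fact (k + 2 * j - 1) * real k / real (dfact (2 * j))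
      * hyp3F2 1 (- real (k + j)) (- real j)
          (- real (k + 2 * j - 1) / 2) (- real (k + 2 * j - 1) / 2 + 1 / 2) 1 j"
    using assms(1) by (rule hyp3F2_eq_f_closed[symmetric])
  finally show ?thesis
    unfolding args of_nat_fact j_def[symmetric] .
qed

theorem lemma9:
  fixes n :: nat
  assumes "n \<ge> 2"
  shows "f 0 n = dfact (2 * n - 4) \<and>
    (\<forall>k. 1 \<le> k \<and> k \<le> n - 2 \<longrightarrow>
           real (f k n) =
             real (fact (2 * n - k - 5)) * real k / real (dfact (2 * n - 2 * k - 4))
             * hyp3F2 1 (2 - real n) (real k + 2 - real n)
                      ((real k + 5) / 2 - real n) (real k / 2 - real n + 3) 1 (n - k - 2))"
  using assms f_0_eq_dfact f_eq_hyp3F2 by auto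

end
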